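(* Let $X$ and $Y$ be sets, and let $\alpha$ be either an infinite cardinal or $0$. Then: (i) if $\aleph_0 \leq |X| < |Y|$ and $\alpha \in \{0, |Y|\}$, then every sequence of words (over a countable alphabet) that is universal for $I(X,\alpha)$ is also universal for $I(Y,\alpha)$; (ii) if $2^{\aleph_0} < |X| < |Y|$, $|X|$ is a regular cardinal, and either $\alpha < |X|$ or $\alpha \geq |Y|$, then every sequence of words (over a countable alphabet) that is universal for $I(Y,\alpha)$ is also universal for $I(X,\alpha)$.
   Context: For an alphabet $A$ (a finite or countable set), $A^+$ is the free semigroup of non-empty words over $A$. A sequence $w_1, w_2, \ldots \in A^+$ is universal for a semigroup $S$ if for every sequence $s_1, s_2, \ldots \in S$ there is a homomorphism $\phi: A^+ \to S$ with $(w_n)\phi = s_n$ for all $n \geq 1$. For a set $X$, $I(X)$ is the symmetric inverse monoid of all partial permutations of $X$ (bijections between subsets of $X$) under composition of binary relations. For $\alpha$ an infinite cardinal or $0$, $I(X,\alpha)$ is the inverse subsemigroup of $I(X)$ consisting of all partial permutations $f$ with $|X\setminus \operatorname{dom}(f)| \leq \alpha$ and $|X\setminus \operatorname{ran}(f)| \leq \alpha$. Thus $I(X,0)=\operatorname{Sym}(X)$ and $I(X,\alpha)=I(X)$ for $\alpha\ge |X|$. An infinite cardinal $\lambda$ is regular if it is not the union of fewer than $\lambda$ sets each of cardinality less than $\lambda$. *)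

theory Defs
  imports Main "HOL-Library.Countable_Set"
begin

text \<open>Partial permutations of X, represented as binary relations (graphs), composed
  as binary relations with relcomp (O), i.e. left to right as in the paper.\<close>
definition partial_perm :: "'x set \<Rightarrow> 'x rel \<Rightarrow> bool" where
  "partial_perm X f \<longleftrightarrow> f \<subseteq> X \<times> X \<and> single_valued f \<and> single_valued (f\<inverse>)"

text \<open>I(X, alpha), where the cardinal alpha is given as the cardinality of a set Al.\<close>
definition Ialpha :: "'x set \<Rightarrow> 'c set \<Rightarrow> 'x rel set" where
  "Ialpha X Al = {f. partial_perm X f
      \<and> ordLeq2 (card_of (X - Domain f)) (card_of Al)
      \<and> ordLeq2 (card_of (X - Range f)) (card_of Al)}"

definition word_seq :: "'a set \<Rightarrow> (nat \<Rightarrow> 'a list) \<Rightarrow> bool" where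
  "word_seq A w \<longleftrightarrow> (\<forall>n. w n \<noteq> [] \<and> set (w n) \<subseteq> A)"

definition semigroup_hom :: "'a set \<Rightarrow> 'x rel set \<Rightarrow> ('a list \<Rightarrow> 'x rel) \<Rightarrow> bool" where
  "semigroup_hom A S h \<longleftrightarrow>
     (\<forall>u. u \<noteq> [] \<and> set u \<subseteq> A \<longrightarrow> h u \<in> S) \<and>
     (\<forall>u v. u \<noteq> [] \<and> set u \<subseteq> A \<and> v \<noteq> [] \<and> set v \<subseteq> A \<longrightarrow> h (u @ v) = h u O h v)"

definition universal :: "'a set \<Rightarrow> (nat \<Rightarrow> 'a list) \<Rightarrow> 'x rel set \<Rightarrow> bool" where
  "universal A w S \<longleftrightarrow>
     (\<forall>s. (\<forall>n. s n \<in> S) \<longrightarrow> (\<exists>h. semigroup_hom A S h \<and> (\<forall>n. h (w n) = s n)))"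

definition regular_card :: "'x set \<Rightarrow> bool" where
  "regular_card X \<longleftrightarrow> infinite X \<and>
     (\<forall>F :: 'x set set. ordLess2 (card_of F) (card_of X)
        \<and> (\<forall>B\<in>F. ordLess2 (card_of B) (card_of X)) \<longrightarrow> \<Union>F \<noteq> X)"

end

(*
  The partial permutations f n of a sequence in I(S, alpha) split S into orbits, the classes
  of the equivalence relation generated by all f n.  Orbits are countable, and the sequence
  restricts to every union of orbits.

  (i) Given a sequence in I(Y, alpha), group its orbits into blocks of size |X|.  On each block
  the sequence is realized by universality for I(X, alpha), transported along a bijection, and
  the realizing homomorphisms are glued; for alpha = 0 or alpha = |Y| the glued maps again lie
  in I(Y, alpha).

  (ii) Given a sequence in I(X, alpha), the isomorphism type of an orbit is determined by a
  code taking at most 2^aleph_0 values, and if alpha < |X| then fewer than |X| orbits meet the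
  complement of a domain or range.  By regularity, |X| orbits K avoiding these complements are
  isomorphic to a single orbit C.  Replacing K by |Y| copies of C gives a sequence on a set of
  size |Y| that stays in I(-, alpha), so it is realized by some h.  Closing under the countably
  many h u, a Loewenheim-Skolem argument finds an h-invariant subset with only |X| copies of C;
  it is isomorphic to X, and the restriction of h realizes the original sequence.
*)

theory Submission
  imports Defs "HOL-Library.Disjoint_Sets"
begin

unbundle cardinal_syntax

definition realizable :: "'a set \<Rightarrow> (nat \<Rightarrow> 'a list) \<Rightarrow> 'x rel set \<Rightarrow> (nat \<Rightarrow> 'x rel) \<Rightarrow> bool" where
  "realizable A w S f \<longleftrightarrow> (\<exists>h. semigroup_hom A S h \<and> (\<forall>n. h (w n) = f n))"

lemma universal_iff_realizable:
  "universal A w S \<longleftrightarrow> (\<forall>f. (\<forall>n. f n \<in> S) \<longrightarrow> realizable A w S f)"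
  unfolding universal_def realizable_def by blast

lemma semigroup_homD:
  assumes "semigroup_hom A S h" "u \<noteq> []" "set u \<subseteq> A"
  shows "h u \<in> S"
  using assms unfolding semigroup_hom_def by blast

lemma semigroup_hom_append:
  assumes "semigroup_hom A S h" "u \<noteq> []" "set u \<subseteq> A" "v \<noteq> []" "set v \<subseteq> A"
  shows "h (u @ v) = h u O h v"
  using assms unfolding semigroup_hom_def by blast

lemma Ialpha_subset: "r \<in> Ialpha S Al \<Longrightarrow> r \<subseteq> S \<times> S"
  unfolding Ialpha_def partial_perm_def by blast

lemma Ialpha_single_valued: "r \<in> Ialpha S Al \<Longrightarrow> single_valued r \<and> single_valued (r\<inverse>)"
  unfolding Ialpha_def partial_perm_def by blast

lemma Ialpha_partial_perm: "r \<in> Ialpha S Al \<Longrightarrow> partial_perm S r"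
  unfolding Ialpha_def by blast

lemma card_of_ordLeq_empty_iff: "|B| \<le>o |{}| \<longleftrightarrow> B = {}"
  by (auto dest: card_of_empty3 simp: card_of_empty)

lemma Ialpha_empty_iff:
  "r \<in> Ialpha S {} \<longleftrightarrow> partial_perm S r \<and> S \<subseteq> Domain r \<and> S \<subseteq> Range r"
  unfolding Ialpha_def card_of_ordLeq_empty_iff by blast

lemma Ialpha_large_iff:
  assumes "|S| \<le>o |Al|"
  shows "r \<in> Ialpha S Al \<longleftrightarrow> partial_perm S r"
  unfolding Ialpha_def using assms card_of_mono1[of "S - _" S] ordLeq_transitive by blast

section \<open>Transport along bijections\<close>

lemma map_prod_relcomp:
  assumes "inj_on g S" "r \<subseteq> S \<times> S" "r' \<subseteq> S \<times> S"
  shows "map_prod g g ` (r O r') = map_prod g g ` r O map_prod g g ` r'"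
proof
  show "map_prod g g ` r O map_prod g g ` r' \<subseteq> map_prod g g ` (r O r')"
  proof clarify
    fix x y y' z assume "(x, y) \<in> r" "(y', z) \<in> r'" "g y = g y'"
    with assms have "y = y'" by (meson SigmaD1 SigmaD2 inj_onD subsetD)
    with \<open>(x, y) \<in> r\<close> \<open>(y', z) \<in> r'\<close> show "(g x, g z) \<in> map_prod g g ` (r O r')"
      by force
  qed
qed force

lemma map_prod_image_comp: "map_prod f f ` map_prod g g ` r = map_prod (f \<circ> g) (f \<circ> g) ` r"
  by (simp add: image_comp map_prod.comp)

lemma map_prod_image_id_on:
  assumes "\<And>x. x \<in> S \<Longrightarrow> g x = x" "r \<subseteq> S \<times> S"
  shows "map_prod g g ` r = r"
proof
  show "map_prod g g ` r \<subseteq> r" using assms by force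
  show "r \<subseteq> map_prod g g ` r"
  proof
    fix p assume "p \<in> r"
    moreover from this assms have "map_prod g g p = p" by (cases p) auto
    ultimately show "p \<in> map_prod g g ` r" by (metis image_eqI)
  qed
qed

lemma single_valued_map_prod:
  assumes "inj_on g S" "r \<subseteq> S \<times> S" "single_valued r"
  shows "single_valued (map_prod g g ` r)"
proof (rule single_valuedI, clarsimp)
  fix x y x' z assume "(x, y) \<in> r" "(x', z) \<in> r" "g x = g x'"
  with assms(1,2) have "x = x'" by (meson SigmaD1 inj_onD subsetD)
  with assms(3) \<open>(x, y) \<in> r\<close> \<open>(x', z) \<in> r\<close> show "g y = g z"
    by (metis single_valuedD)
qed

lemma partial_perm_map_prod:
  assumes "bij_betw g S T" "partial_perm S r"
  shows "partial_perm T (map_prod g g ` r)"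
proof -
  have inj: "inj_on g S" and r: "r \<subseteq> S \<times> S" "single_valued r" "single_valued (r\<inverse>)"
    using assms unfolding bij_betw_def partial_perm_def by auto
  have "(map_prod g g ` r)\<inverse> = map_prod g g ` r\<inverse>" by force
  moreover have "r\<inverse> \<subseteq> S \<times> S" using r(1) by blast
  moreover have "map_prod g g ` r \<subseteq> T \<times> T"
    using r(1) assms(1) unfolding bij_betw_def by auto
  ultimately show ?thesis
    unfolding partial_perm_def using single_valued_map_prod[OF inj] r by metis
qed

lemma bij_betw_image_Diff:
  assumes "bij_betw g S T" "D \<subseteq> S"
  shows "T - g ` D = g ` (S - D)"
  using assms inj_on_image_set_diff[of g S S D] unfolding bij_betw_def by auto

lemma Ialpha_map_prod:
  assumes g: "bij_betw g S T" and r: "r \<in> Ialpha S Al"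
  shows "map_prod g g ` r \<in> Ialpha T Al"
proof -
  have sub: "Domain r \<subseteq> S" "Range r \<subseteq> S" using Ialpha_subset[OF r] by blast+
  have "Domain (map_prod g g ` r) = g ` Domain r" "Range (map_prod g g ` r) = g ` Range r"
    by force+
  then have "T - Domain (map_prod g g ` r) = g ` (S - Domain r)"
    "T - Range (map_prod g g ` r) = g ` (S - Range r)"
    using bij_betw_image_Diff[OF g] sub by simp_all
  moreover have "|S - Domain r| \<le>o |Al|" "|S - Range r| \<le>o |Al|" "partial_perm S r"
    using r unfolding Ialpha_def by blast+
  ultimately show ?thesis
    unfolding Ialpha_def using partial_perm_map_prod[OF g] card_of_image ordLeq_transitive
    by (metis (no_types, lifting) mem_Collect_eq)
qed

lemma realizable_map_prod:
  assumes f: "realizable A w (Ialpha S Al) f" and g: "bij_betw g S T"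
  shows "realizable A w (Ialpha T Al) (\<lambda>n. map_prod g g ` f n)"
proof -
  obtain h where h: "semigroup_hom A (Ialpha S Al) h" "\<forall>n. h (w n) = f n"
    using f unfolding realizable_def by blast
  have inj: "inj_on g S" using g by (rule bij_betw_imp_inj_on)
  have "semigroup_hom A (Ialpha T Al) (\<lambda>u. map_prod g g ` h u)"
    unfolding semigroup_hom_def
  proof (intro conjI allI impI; elim conjE)
    fix u assume "u \<noteq> []" "set u \<subseteq> A"
    then show "map_prod g g ` h u \<in> Ialpha T Al"
      using Ialpha_map_prod[OF g] semigroup_homD[OF h(1)] by blast
  next
    fix u v assume uv: "u \<noteq> []" "set u \<subseteq> A" "v \<noteq> []" "set v \<subseteq> A"
    then have "h u \<subseteq> S \<times> S" "h v \<subseteq> S \<times> S"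
      using Ialpha_subset semigroup_homD[OF h(1)] by blast+
    then show "map_prod g g ` h (u @ v) = map_prod g g ` h u O map_prod g g ` h v"
      using semigroup_hom_append[OF h(1) uv] map_prod_relcomp[OF inj] by simp
  qed
  with h(2) show ?thesis unfolding realizable_def by auto
qed

lemma universal_Ialpha_bij_betw:
  assumes U: "universal A w (Ialpha S Al)" and g: "bij_betw g S T"
  shows "universal A w (Ialpha T Al)"
  unfolding universal_iff_realizable
proof (intro allI impI)
  fix f :: "nat \<Rightarrow> _" assume f: "\<forall>n. f n \<in> Ialpha T Al"
  let ?g' = "inv_into S g"
  have g': "bij_betw ?g' T S" using g by (rule bij_betw_inv_into)
  have "\<forall>n. map_prod ?g' ?g' ` f n \<in> Ialpha S Al"
    using f Ialpha_map_prod[OF g'] by blast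
  with U have "realizable A w (Ialpha S Al) (\<lambda>n. map_prod ?g' ?g' ` f n)"
    unfolding universal_iff_realizable by simp
  then have "realizable A w (Ialpha T Al) (\<lambda>n. map_prod g g ` map_prod ?g' ?g' ` f n)"
    using g by (rule realizable_map_prod)
  moreover have "map_prod g g ` map_prod ?g' ?g' ` f n = f n" for n
    unfolding map_prod_image_comp using Ialpha_subset[OF f[rule_format]] bij_betw_inv_into_right[OF g]
    by (intro map_prod_image_id_on[of T]) auto
  ultimately show "realizable A w (Ialpha T Al) f" by simp
qed

lemma universal_Ialpha_card_eq:
  "universal A w (Ialpha S Al) \<Longrightarrow> |S| =o |T| \<Longrightarrow> universal A w (Ialpha T Al)"
  using card_of_ordIso universal_Ialpha_bij_betw by blast

section \<open>Invariant subsets and partitions\<close>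

definition rel_invariant :: "'x set \<Rightarrow> 'x rel \<Rightarrow> bool" where
  "rel_invariant Z r \<longleftrightarrow> r `` Z \<subseteq> Z \<and> r\<inverse> `` Z \<subseteq> Z"

lemma rel_invariant_Union: "\<forall>Z\<in>F. rel_invariant Z r \<Longrightarrow> rel_invariant (\<Union>F) r"
  unfolding rel_invariant_def by blast

lemma rel_invariant_Diff: "rel_invariant Z r \<Longrightarrow> rel_invariant Z' r \<Longrightarrow> rel_invariant (Z - Z') r"
  unfolding rel_invariant_def by blast

lemma Domain_restrict_invariant: "rel_invariant Z r \<Longrightarrow> Domain (r \<inter> Z \<times> Z) = Z \<inter> Domain r"
  unfolding rel_invariant_def by (auto simp: Domain_iff)

lemma Range_restrict_invariant: "rel_invariant Z r \<Longrightarrow> Range (r \<inter> Z \<times> Z) = Z \<inter> Range r"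
  unfolding rel_invariant_def by (auto simp: Range_iff)

lemma partial_perm_restrict: "partial_perm S r \<Longrightarrow> partial_perm Z (r \<inter> Z \<times> Z)"
  unfolding partial_perm_def single_valued_def by blast

lemma Ialpha_restrict:
  assumes r: "r \<in> Ialpha S Al" and "Z \<subseteq> S" and inv: "rel_invariant Z r"
  shows "r \<inter> Z \<times> Z \<in> Ialpha Z Al"
proof -
  have "Z - Domain (r \<inter> Z \<times> Z) \<subseteq> S - Domain r" "Z - Range (r \<inter> Z \<times> Z) \<subseteq> S - Range r"
    using \<open>Z \<subseteq> S\<close> inv unfolding rel_invariant_def by blast+
  moreover have "|S - Domain r| \<le>o |Al|" "|S - Range r| \<le>o |Al|"
    using r unfolding Ialpha_def by blast+
  ultimately have "|Z - Domain (r \<inter> Z \<times> Z)| \<le>o |Al|" "|Z - Range (r \<inter> Z \<times> Z)| \<le>o |Al|"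
    by (meson card_of_mono1 ordLeq_transitive)+
  moreover have "partial_perm Z (r \<inter> Z \<times> Z)"
    using Ialpha_partial_perm[OF r] by (rule partial_perm_restrict)
  ultimately show ?thesis unfolding Ialpha_def by blast
qed

lemma relcomp_restrict: "r `` Z \<subseteq> Z \<Longrightarrow> (r O r') \<inter> Z \<times> Z = (r \<inter> Z \<times> Z) O (r' \<inter> Z \<times> Z)"
  by blast

lemma semigroup_hom_restrict:
  assumes h: "semigroup_hom A (Ialpha S Al) h" and "Z \<subseteq> S"
    and inv: "\<And>u. u \<noteq> [] \<Longrightarrow> set u \<subseteq> A \<Longrightarrow> rel_invariant Z (h u)"
  shows "semigroup_hom A (Ialpha Z Al) (\<lambda>u. h u \<inter> Z \<times> Z)"
  unfolding semigroup_hom_def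
proof (intro conjI allI impI; elim conjE)
  fix u assume "u \<noteq> []" "set u \<subseteq> A"
  then show "h u \<inter> Z \<times> Z \<in> Ialpha Z Al"
    using Ialpha_restrict[OF semigroup_homD[OF h] \<open>Z \<subseteq> S\<close> inv] by blast
next
  fix u v assume uv: "u \<noteq> []" "set u \<subseteq> A" "v \<noteq> []" "set v \<subseteq> A"
  then have "h u `` Z \<subseteq> Z" using inv unfolding rel_invariant_def by blast
  then show "h (u @ v) \<inter> Z \<times> Z = (h u \<inter> Z \<times> Z) O (h v \<inter> Z \<times> Z)"
    using semigroup_hom_append[OF h uv] relcomp_restrict by simp
qed

lemma rel_eq_UN_restrict:
  assumes "r \<subseteq> \<Union>P \<times> \<Union>P" "\<forall>p\<in>P. r `` p \<subseteq> p"
  shows "r = (\<Union>p\<in>P. r \<inter> p \<times> p)"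
proof
  show "r \<subseteq> (\<Union>p\<in>P. r \<inter> p \<times> p)"
  proof (rule subrelI)
    fix x y assume xy: "(x, y) \<in> r"
    then obtain p where "p \<in> P" "x \<in> p" using assms(1) by blast
    moreover from this xy have "y \<in> p" using assms(2) by blast
    ultimately show "(x, y) \<in> (\<Union>p\<in>P. r \<inter> p \<times> p)" using xy by blast
  qed
qed blast

lemma disjoint_common_elem: "disjoint P \<Longrightarrow> p \<in> P \<Longrightarrow> p' \<in> P \<Longrightarrow> x \<in> p \<Longrightarrow> x \<in> p' \<Longrightarrow> p = p'"
  unfolding pairwise_def disjnt_def by blast

lemma single_valued_UN_disjoint:
  assumes "disjoint P" "\<forall>p\<in>P. r p \<subseteq> p \<times> p \<and> single_valued (r p)"
  shows "single_valued (\<Union>p\<in>P. r p)"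
proof (rule single_valuedI, elim UN_E)
  fix x y z p p' assume xy: "p \<in> P" "(x, y) \<in> r p" and xz: "p' \<in> P" "(x, z) \<in> r p'"
  with assms(2) have "x \<in> p" "x \<in> p'" by blast+
  with xy(1) xz(1) have "p = p'" by (rule disjoint_common_elem[OF assms(1)])
  with xy xz assms(2) show "y = z" by (metis single_valuedD)
qed

lemma partial_perm_UN_disjoint:
  assumes P: "disjoint P" and r: "\<forall>p\<in>P. partial_perm p (r p)"
  shows "partial_perm (\<Union>P) (\<Union>p\<in>P. r p)"
proof -
  have "single_valued (\<Union>p\<in>P. r p)"
    by (rule single_valued_UN_disjoint[OF P]) (use r in \<open>auto simp: partial_perm_def\<close>)
  moreover have "single_valued (\<Union>p\<in>P. (r p)\<inverse>)"
    by (rule single_valued_UN_disjoint[OF P]) (use r in \<open>auto simp: partial_perm_def\<close>)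
  moreover have "(\<Union>p\<in>P. r p) \<subseteq> \<Union>P \<times> \<Union>P" using r unfolding partial_perm_def by blast
  ultimately show ?thesis unfolding partial_perm_def converse_UNION by blast
qed

lemma relcomp_UN_disjoint:
  assumes "disjoint P" "\<forall>p\<in>P. r p \<subseteq> p \<times> p \<and> r' p \<subseteq> p \<times> p"
  shows "(\<Union>p\<in>P. r p) O (\<Union>p\<in>P. r' p) = (\<Union>p\<in>P. r p O r' p)"
proof
  show "(\<Union>p\<in>P. r p) O (\<Union>p\<in>P. r' p) \<subseteq> (\<Union>p\<in>P. r p O r' p)"
  proof (rule subrelI)
    fix x z assume "(x, z) \<in> (\<Union>p\<in>P. r p) O (\<Union>p\<in>P. r' p)"
    then obtain y p p' where xy: "p \<in> P" "(x, y) \<in> r p" and yz: "p' \<in> P" "(y, z) \<in> r' p'"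
      by blast
    with assms(2) have "y \<in> p" "y \<in> p'" by blast+
    with xy(1) yz(1) have "p = p'" using disjoint_common_elem[OF assms(1)] by blast
    with xy yz show "(x, z) \<in> (\<Union>p\<in>P. r p O r' p)" by blast
  qed
qed blast

lemma semigroup_hom_UN_disjoint:
  assumes P: "disjoint P" and H: "\<forall>p\<in>P. semigroup_hom A (Ialpha p Al) (H p)"
    and Al: "Al = {} \<or> |\<Union>P| \<le>o |Al|"
  shows "semigroup_hom A (Ialpha (\<Union>P) Al) (\<lambda>u. \<Union>p\<in>P. H p u)"
  unfolding semigroup_hom_def
proof (intro conjI allI impI; elim conjE)
  fix u assume u: "u \<noteq> []" "set u \<subseteq> A"
  then have Hu: "\<forall>p\<in>P. H p u \<in> Ialpha p Al" using H semigroup_homD[OF _ u] by blast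
  then have pp: "partial_perm (\<Union>P) (\<Union>p\<in>P. H p u)"
    by (intro partial_perm_UN_disjoint[OF P] ballI Ialpha_partial_perm) blast
  show "(\<Union>p\<in>P. H p u) \<in> Ialpha (\<Union>P) Al"
  proof (cases "Al = {}")
    case True
    then have "\<forall>p\<in>P. p \<subseteq> Domain (H p u)" "\<forall>p\<in>P. p \<subseteq> Range (H p u)"
      using Hu unfolding True Ialpha_empty_iff by blast+
    then have "\<Union>P \<subseteq> Domain (\<Union>p\<in>P. H p u)" "\<Union>P \<subseteq> Range (\<Union>p\<in>P. H p u)"
      by (auto simp: Domain_Union Range_Union) blast+
    with pp show ?thesis unfolding True Ialpha_empty_iff by blast
  next
    case False
    with Al have "|\<Union>P| \<le>o |Al|" by blast
    with pp show ?thesis by (simp add: Ialpha_large_iff)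
  qed
next
  fix u v assume uv: "u \<noteq> []" "set u \<subseteq> A" "v \<noteq> []" "set v \<subseteq> A"
  have "\<forall>p\<in>P. H p u \<subseteq> p \<times> p \<and> H p v \<subseteq> p \<times> p"
    using H semigroup_homD[OF _ uv(1,2)] semigroup_homD[OF _ uv(3,4)] Ialpha_subset by blast
  then have "(\<Union>p\<in>P. H p u) O (\<Union>p\<in>P. H p v) = (\<Union>p\<in>P. H p u O H p v)"
    by (rule relcomp_UN_disjoint[OF P])
  also have "\<dots> = (\<Union>p\<in>P. H p (u @ v))"
  proof -
    have "\<forall>p\<in>P. H p (u @ v) = H p u O H p v" using H semigroup_hom_append[OF _ uv] by blast
    then show ?thesis by simp
  qed
  finally show "(\<Union>p\<in>P. H p (u @ v)) = (\<Union>p\<in>P. H p u) O (\<Union>p\<in>P. H p v)" by simp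
qed

section \<open>Orbits\<close>

definition orbit_rel :: "'x set \<Rightarrow> (nat \<Rightarrow> 'x rel) \<Rightarrow> 'x rel" where
  "orbit_rel S f = (\<Union>n. f n \<union> (f n)\<inverse>)\<^sup>* \<inter> S \<times> S"

lemma equiv_orbit_rel: "equiv S (orbit_rel S f)"
proof -
  let ?G = "\<Union>n. f n \<union> (f n)\<inverse>"
  have "sym (?G\<^sup>*)" by (rule sym_rtrancl) (auto simp: sym_def)
  then have "sym (orbit_rel S f)" unfolding orbit_rel_def sym_def by blast
  moreover have "orbit_rel S f \<subseteq> S \<times> S" "refl_on S (orbit_rel S f)"
    unfolding orbit_rel_def refl_on_def by blast+
  moreover have "trans (orbit_rel S f)"
    unfolding orbit_rel_def trans_def by (auto intro: rtrancl_trans)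
  ultimately show ?thesis unfolding equiv_def by blast
qed

lemma orbit_rel_step: "f n \<subseteq> S \<times> S \<Longrightarrow> (x, y) \<in> f n \<Longrightarrow> (x, y) \<in> orbit_rel S f"
  unfolding orbit_rel_def by blast

lemma rel_invariant_orbit:
  assumes f: "f n \<subseteq> S \<times> S" and c: "c \<in> S // orbit_rel S f"
  shows "rel_invariant c (f n)"
proof -
  have "y \<in> c" if "x \<in> c" "(x, y) \<in> orbit_rel S f" for x y
    using in_quotient_imp_closed[OF equiv_orbit_rel c that] .
  moreover have "(y, x) \<in> orbit_rel S f" if "(x, y) \<in> f n" for x y
    using orbit_rel_step[of f n S, OF f that] equiv_orbit_rel by (metis equivE symD)
  ultimately show ?thesis
    unfolding rel_invariant_def using orbit_rel_step[of f n S, OF f] by blast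
qed

lemma countable_Image_single_valued: "single_valued r \<Longrightarrow> countable (r `` {a})"
proof (cases "a \<in> Domain r")
  case True
  then obtain b where "(a, b) \<in> r" by blast
  moreover assume "single_valued r"
  ultimately have "r `` {a} = {b}" unfolding single_valued_def by blast
  then show ?thesis by simp
qed (simp add: Domain_iff Image_def)

lemma countable_orbit:
  assumes f: "\<forall>n. single_valued (f n) \<and> single_valued ((f n)\<inverse>)" and c: "c \<in> S // orbit_rel S f"
  shows "countable c"
proof -
  let ?G = "\<Union>n. f n \<union> (f n)\<inverse>"
  have "countable (?G `` {y})" for y
    unfolding UN_Image Un_Image using f by (intro countable_UN countable_Un countable_Image_single_valued) auto
  then have "countable (?G `` Y)" if "countable Y" for Y
    using countable_Image[OF _ that] by blast
  then have "countable (?G\<^sup>* `` {x})" for x by (intro countable_rtrancl) auto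
  moreover obtain x where "c = orbit_rel S f `` {x}" using c by (rule quotientE)
  then have "c \<subseteq> ?G\<^sup>* `` {x}" unfolding orbit_rel_def by blast
  ultimately show ?thesis by (meson countable_subset)
qed

lemma orbit_partition:
  assumes f: "\<forall>n. f n \<in> Ialpha S Al"
  shows "\<Union>(S // orbit_rel S f) = S" "disjoint (S // orbit_rel S f)"
    "\<forall>c\<in>S // orbit_rel S f. countable c \<and> c \<noteq> {}"
proof -
  show "\<Union>(S // orbit_rel S f) = S" by (rule Union_quotient[OF equiv_orbit_rel])
  show "disjoint (S // orbit_rel S f)"
    using quotient_disj[OF equiv_orbit_rel, of _ S f] by (intro disjointI) blast
  have "\<forall>n. single_valued (f n) \<and> single_valued ((f n)\<inverse>)" using f Ialpha_single_valued by blast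
  then show "\<forall>c\<in>S // orbit_rel S f. countable c \<and> c \<noteq> {}"
    using countable_orbit in_quotient_imp_non_empty[OF equiv_orbit_rel] by blast
qed

section \<open>Cardinal arithmetic\<close>

lemma countable_ordLeq_nat: "countable S \<Longrightarrow> |S| \<le>o |UNIV :: nat set|"
  by (rule card_of_ordLeqI[of "to_nat_on S"]) auto

lemma countable_ordLeq_infinite: "countable S \<Longrightarrow> infinite X \<Longrightarrow> |S| \<le>o |X|"
  using ordLeq_transitive[OF countable_ordLeq_nat infinite_iff_card_of_nat[THEN iffD1]] .

lemma card_of_nat_ordLeq_nat_set: "|UNIV :: nat set| \<le>o |UNIV :: nat set set|"
  by (rule card_of_ordLeqI[of "\<lambda>n. {n}"]) (simp_all add: inj_on_def)

lemma card_of_Un_ordLeq_infinite: "infinite C \<Longrightarrow> |A| \<le>o |C| \<Longrightarrow> |B| \<le>o |C| \<Longrightarrow> |A \<union> B| \<le>o |C|"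
  using card_of_Un_ordLeq_infinite_Field[of "|C|", unfolded Field_card_of, OF _ _ _ card_of_card_order_on] .

lemma finite_ordLess_infinite2: "finite A \<Longrightarrow> infinite B \<Longrightarrow> |A| <o |B|"
  by (meson card_of_Well_order card_of_ordLeq_finite not_ordLeq_iff_ordLess)

lemma card_of_disjoint_ordLeq:
  assumes Q: "disjoint Q" and D: "\<forall>c\<in>Q. c \<inter> D \<noteq> {}"
  shows "|Q| \<le>o |D|"
proof (rule card_of_ordLeqI)
  let ?pick = "\<lambda>c. SOME x. x \<in> c \<inter> D"
  have pick: "?pick c \<in> c \<inter> D" if "c \<in> Q" for c
  proof -
    from D that obtain x where "x \<in> c \<inter> D" by blast
    then show ?thesis by (rule someI)
  qed
  show "inj_on ?pick Q"
  proof (rule inj_onI)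
    fix c c' assume "c \<in> Q" "c' \<in> Q" "?pick c = ?pick c'"
    with pick have "?pick c \<in> c" "?pick c \<in> c'" by (metis IntD1)+
    with \<open>c \<in> Q\<close> \<open>c' \<in> Q\<close> show "c = c'" by (rule disjoint_common_elem[OF Q])
  qed
  show "?pick c \<in> D" if "c \<in> Q" for c using pick[OF that] by blast
qed

lemma card_of_Union_countable_ordLess:
  assumes nat: "|UNIV :: nat set| <o |X|" and I: "|I| <o |X|" and cI: "\<forall>c\<in>I. countable c"
  shows "|\<Union>I| <o |X|"
proof -
  have X: "infinite X" using infinite_iff_card_of_nat[of X] ordLess_imp_ordLeq[OF nat] by simp
  let ?B = "I <+> (UNIV :: nat set)"
  have B: "infinite ?B" by (simp add: infinite_UNIV_nat)
  have "|\<Union>c\<in>I. c| \<le>o |?B|"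
    using cI countable_ordLeq_infinite[OF _ B] by (intro card_of_UNION_ordLeq_infinite[OF B card_of_Plus1]) auto
  then have "|\<Union>I| \<le>o |?B|" by simp
  also have "|?B| <o |X|" using card_of_Plus_ordLess_infinite[OF X I nat] .
  finally show ?thesis .
qed

lemma card_of_Union_countable_ordLeq:
  assumes X: "infinite X" and Q: "|Q| \<le>o |X|" "\<forall>c\<in>Q. countable c"
  shows "|\<Union>Q| \<le>o |X|"
proof -
  have "|\<Union>c\<in>Q. c| \<le>o |X|"
    using Q countable_ordLeq_infinite[OF _ X] by (intro card_of_UNION_ordLeq_infinite[OF X]) auto
  then show ?thesis by simp
qed

lemma card_of_UN_countable_disjoint:
  assumes X: "infinite X" and F: "inj_on F X" "disjoint (F ` X)" "\<forall>x\<in>X. countable (F x) \<and> F x \<noteq> {}"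
  shows "|\<Union>x\<in>X. F x| =o |X|"
proof -
  have "|\<Union>x\<in>X. F x| \<le>o |X|"
    using F(3) card_of_Union_countable_ordLeq[OF X card_of_image, of F] by auto
  moreover have "|X| =o |F ` X|" using F(1) by (rule card_of_ordIsoI[OF inj_on_imp_bij_betw])
  moreover have "|F ` X| \<le>o |\<Union>x\<in>X. F x|"
    using F(2,3) by (intro card_of_disjoint_ordLeq) auto
  ultimately show ?thesis by (simp add: ordIso_iff_ordLeq ordIso_ordLeq_trans[of "|X|"])
qed

lemma exists_coarser_partition:
  assumes X: "infinite X" and XY: "|X| <o |Y|"
    and Q: "\<Union>Q = Y" "disjoint Q" "\<forall>c\<in>Q. countable c \<and> c \<noteq> {}"
  shows "\<exists>B. \<Union>B = Y \<and> disjoint B \<and> (\<forall>b\<in>B. |b| =o |X| \<and> (\<exists>Q'\<subseteq>Q. b = \<Union>Q'))"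
proof -
  have QX: "|X| <o |Q|"
  proof (rule ccontr)
    assume "\<not> |X| <o |Q|"
    then have "|Q| \<le>o |X|" by (simp add: not_ordLess_iff_ordLeq[OF card_of_Well_order card_of_Well_order])
    then have "|Y| \<le>o |X|" using card_of_Union_countable_ordLeq[OF X] Q(1,3) by blast
    then show False using not_ordLess_ordLeq[OF XY] by simp
  qed
  then have "infinite Q" using card_of_ordLeq_finite[OF ordLess_imp_ordLeq[OF QX]] X by blast
  moreover have "X \<noteq> {}" using X by auto
  ultimately have "|Q \<times> X| =o |Q|" using card_of_Times_infinite[OF _ _ ordLess_imp_ordLeq[OF QX]] by blast
  then obtain \<beta> where \<beta>: "bij_betw \<beta> (Q \<times> X) Q" unfolding card_of_ordIso[symmetric] by blast
  have \<beta>Q: "\<beta> (q, x) \<in> Q" if "q \<in> Q" "x \<in> X" for q x using bij_betw_apply[OF \<beta>] that by simp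
  have \<beta>_inj: "inj_on \<beta> (Q \<times> X)" using \<beta> by (rule bij_betw_imp_inj_on)
  define b where "b q = (\<Union>x\<in>X. \<beta> (q, x))" for q
  have b_disj: "q = q'" if "q \<in> Q" "q' \<in> Q" "z \<in> b q" "z \<in> b q'" for q q' z
  proof -
    from that obtain x x' where "x \<in> X" "x' \<in> X" "z \<in> \<beta> (q, x)" "z \<in> \<beta> (q', x')" unfolding b_def by blast
    with that(1,2) \<beta>Q have "\<beta> (q, x) = \<beta> (q', x')" using disjoint_common_elem[OF Q(2)] by blast
    with that(1,2) \<open>x \<in> X\<close> \<open>x' \<in> X\<close> show "q = q'" using inj_onD[OF \<beta>_inj] by blast
  qed
  have b_card: "|b q| =o |X|" if q: "q \<in> Q" for q
    unfolding b_def
  proof (rule card_of_UN_countable_disjoint[OF X])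
    show "inj_on (\<lambda>x. \<beta> (q, x)) X" using q inj_onD[OF \<beta>_inj] by (auto intro: inj_onI)
    show "disjoint ((\<lambda>x. \<beta> (q, x)) ` X)" by (rule pairwise_subset[OF Q(2)]) (use \<beta>Q[OF q] in blast)
    show "\<forall>x\<in>X. countable (\<beta> (q, x)) \<and> \<beta> (q, x) \<noteq> {}" using Q(3) \<beta>Q[OF q] by blast
  qed
  show ?thesis
  proof (rule exI[of _ "b ` Q"], intro conjI ballI)
    have "\<Union>(b ` Q) = \<Union>(\<beta> ` (Q \<times> X))" unfolding b_def by blast
    then show "\<Union>(b ` Q) = Y" using bij_betw_imp_surj_on[OF \<beta>] Q(1) by simp
    show "disjoint (b ` Q)" using b_disj by (auto intro: disjointI)
  next
    fix c assume "c \<in> b ` Q"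
    then obtain q where q: "q \<in> Q" "c = b q" by blast
    then show "|c| =o |X|" using b_card by simp
    show "\<exists>Q'\<subseteq>Q. c = \<Union>Q'"
      using q \<beta>Q unfolding b_def by (intro exI[of _ "\<beta> ` ({q} \<times> X)"]) auto
  qed
qed

lemma regular_card_pigeonhole:
  fixes g :: "'x set \<Rightarrow> 'k"
  assumes reg: "regular_card X" and nat: "|UNIV :: nat set| <o |X|"
    and Q: "\<Union>Q = X" "\<forall>c\<in>Q. countable c"
    and K: "|UNIV :: 'k set| <o |X|" and bad: "|{c\<in>Q. \<not> P c}| <o |X|"
  shows "\<exists>\<tau>. |X| \<le>o |{c\<in>Q. P c \<and> g c = \<tau>}|"
proof (rule ccontr)
  assume "\<nexists>\<tau>. |X| \<le>o |{c\<in>Q. P c \<and> g c = \<tau>}|"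
  then have small: "|{c\<in>Q. P c \<and> g c = \<tau>}| <o |X|" for \<tau>
    by (simp add: not_ordLeq_iff_ordLess[OF card_of_Well_order card_of_Well_order])
  have X: "infinite X" using reg unfolding regular_card_def by simp
  define F where "F = range (\<lambda>\<tau>. \<Union>{c\<in>Q. P c \<and> g c = \<tau>}) \<union> {\<Union>{c\<in>Q. \<not> P c}}"
  have "|range (\<lambda>\<tau>. \<Union>{c\<in>Q. P c \<and> g c = \<tau>})| <o |X|"
    using ordLeq_ordLess_trans[OF card_of_image K] .
  moreover have "|{\<Union>{c\<in>Q. \<not> P c}}| <o |X|" by (rule finite_ordLess_infinite2[OF _ X]) simp
  ultimately have "|F| <o |X|" unfolding F_def by (rule card_of_Un_ordLess_infinite[OF X])
  moreover have "\<forall>B\<in>F. |B| <o |X|"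
  proof
    fix B assume "B \<in> F"
    then consider \<tau> where "B = \<Union>{c\<in>Q. P c \<and> g c = \<tau>}" | "B = \<Union>{c\<in>Q. \<not> P c}"
      unfolding F_def by blast
    then show "|B| <o |X|"
      by cases (simp_all add: card_of_Union_countable_ordLess[OF nat] small bad Q(2))
  qed
  moreover have "\<Union>F = X" unfolding F_def using Q(1) by blast
  ultimately show False using reg unfolding regular_card_def by blast
qed

lemma exists_closed_superset:
  assumes X: "infinite X" and E0: "|E0| \<le>o |X|" and N: "\<forall>e. countable (N e)"
  shows "\<exists>E. E0 \<subseteq> E \<and> E \<subseteq> E0 \<union> \<Union>(range N) \<and> |E| \<le>o |X| \<and> (\<forall>e\<in>E. N e \<subseteq> E)"
proof -
  define step where "step E = (\<Union>e\<in>E. insert e (N e))" for E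
  define En where "En n = (step ^^ n) E0" for n
  have En_0: "En 0 = E0" and En_Suc: "En (Suc n) = step (En n)" for n by (simp_all add: En_def)
  have card: "|En n| \<le>o |X|" for n
  proof (induction n)
    case (Suc n)
    have "\<forall>e\<in>En n. |insert e (N e)| \<le>o |X|" using N by (simp add: countable_ordLeq_infinite[OF _ X])
    with Suc show ?case unfolding En_Suc step_def by (rule card_of_UNION_ordLeq_infinite[OF X])
  qed (simp add: En_0 E0)
  have sub: "En n \<subseteq> E0 \<union> \<Union>(range N)" for n
    by (induction n) (auto simp: En_0 En_Suc step_def)
  show ?thesis
  proof (intro exI conjI)
    show "E0 \<subseteq> (\<Union>n. En n)" using En_0 by blast
    show "(\<Union>n. En n) \<subseteq> E0 \<union> \<Union>(range N)" using sub by blast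
    show "|\<Union>n. En n| \<le>o |X|"
      using card infinite_iff_card_of_nat[THEN iffD1, OF X]
      by (intro card_of_UNION_ordLeq_infinite[OF X]) simp_all
    show "\<forall>e\<in>\<Union>n. En n. N e \<subseteq> (\<Union>n. En n)"
    proof
      fix e assume "e \<in> (\<Union>n. En n)"
      then obtain n where "e \<in> En n" by blast
      then have "N e \<subseteq> En (Suc n)" unfolding En_Suc step_def by blast
      then show "N e \<subseteq> (\<Union>n. En n)" by blast
    qed
  qed
qed

section \<open>From smaller to larger sets\<close>

lemma realizable_UN_disjoint:
  assumes B: "disjoint B" and Al: "Al = {} \<or> |\<Union>B| \<le>o |Al|"
    and f: "\<forall>n. f n \<subseteq> \<Union>B \<times> \<Union>B" "\<forall>n. \<forall>b\<in>B. rel_invariant b (f n)"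
    and real: "\<forall>b\<in>B. realizable A w (Ialpha b Al) (\<lambda>n. f n \<inter> b \<times> b)"
  shows "realizable A w (Ialpha (\<Union>B) Al) f"
proof -
  have "\<forall>b\<in>B. \<exists>h. semigroup_hom A (Ialpha b Al) h \<and> (\<forall>n. h (w n) = f n \<inter> b \<times> b)"
    using real unfolding realizable_def .
  from bchoice[OF this] obtain H where H: "\<forall>b\<in>B. semigroup_hom A (Ialpha b Al) (H b)"
    and Hw: "\<forall>b\<in>B. \<forall>n. H b (w n) = f n \<inter> b \<times> b"
    by blast
  have "semigroup_hom A (Ialpha (\<Union>B) Al) (\<lambda>u. \<Union>b\<in>B. H b u)"
    using semigroup_hom_UN_disjoint[OF B H Al] .
  moreover have "(\<Union>b\<in>B. H b (w n)) = f n" for n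
  proof -
    have "f n = (\<Union>b\<in>B. f n \<inter> b \<times> b)"
      using f unfolding rel_invariant_def by (intro rel_eq_UN_restrict) auto
    with Hw show ?thesis by simp
  qed
  ultimately show ?thesis unfolding realizable_def by blast
qed

lemma universal_Ialpha_upward:
  assumes X: "infinite X" and XY: "|X| <o |Y|" and Al: "Al = {} \<or> |Al| =o |Y|"
    and U: "universal A w (Ialpha X Al)"
  shows "universal A w (Ialpha Y Al)"
  unfolding universal_iff_realizable
proof (intro allI impI)
  fix f :: "nat \<Rightarrow> _" assume f: "\<forall>n. f n \<in> Ialpha Y Al"
  let ?Q = "Y // orbit_rel Y f"
  have fY: "f n \<subseteq> Y \<times> Y" for n using f Ialpha_subset by blast
  obtain B where B: "\<Union>B = Y" "disjoint B"
    and B_blocks: "\<forall>b\<in>B. |b| =o |X| \<and> (\<exists>Q'\<subseteq>?Q. b = \<Union>Q')"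
    using exists_coarser_partition[OF X XY orbit_partition[OF f]] by (elim exE conjE)
  have inv: "rel_invariant b (f n)" if "b \<in> B" for b n
  proof -
    obtain Q' where "Q' \<subseteq> ?Q" "b = \<Union>Q'" using B_blocks \<open>b \<in> B\<close> by blast
    then show ?thesis using rel_invariant_orbit[of f n Y, OF fY] by (auto intro: rel_invariant_Union)
  qed
  have "\<forall>b\<in>B. realizable A w (Ialpha b Al) (\<lambda>n. f n \<inter> b \<times> b)"
  proof
    fix b assume b: "b \<in> B"
    then have "universal A w (Ialpha b Al)"
      using universal_Ialpha_card_eq[OF U ordIso_symmetric] B_blocks by blast
    moreover have "\<forall>n. f n \<inter> b \<times> b \<in> Ialpha b Al"
      using Ialpha_restrict f inv[OF b] B(1) b by blast
    ultimately show "realizable A w (Ialpha b Al) (\<lambda>n. f n \<inter> b \<times> b)"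
      unfolding universal_iff_realizable by simp
  qed
  moreover have "Al = {} \<or> |\<Union>B| \<le>o |Al|"
    using Al B(1) ordIso_imp_ordLeq ordIso_symmetric by blast
  ultimately show "realizable A w (Ialpha Y Al) f"
    using realizable_UN_disjoint[OF B(2)] fY inv B(1) by blast
qed

section \<open>Isomorphism types of orbits\<close>

definition iso_code :: "(nat \<Rightarrow> 'x rel) \<Rightarrow> 'x set \<Rightarrow> nat set \<times> (nat \<Rightarrow> nat rel)" where
  "iso_code f c = (to_nat_on c ` c, \<lambda>n. map_prod (to_nat_on c) (to_nat_on c) ` (f n \<inter> c \<times> c))"

lemma iso_code_eq_imp_iso:
  assumes c: "countable c" and c': "countable c'" and eq: "iso_code f c = iso_code f c'"
  shows "\<exists>\<iota>. bij_betw \<iota> c c' \<and> (\<forall>n. map_prod \<iota> \<iota> ` (f n \<inter> c \<times> c) = f n \<inter> c' \<times> c')"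
proof -
  define e where "e = to_nat_on c"
  define e' where "e' = to_nat_on c'"
  let ?\<iota> = "inv_into c' e' \<circ> e"
  have "e ` c = e' ` c'" using eq unfolding e_def e'_def iso_code_def by simp
  then have e: "bij_betw e c (e ` c)" and e': "bij_betw e' c' (e ` c)"
    unfolding e_def e'_def using inj_on_imp_bij_betw inj_on_to_nat_on c c' by metis+
  have "bij_betw ?\<iota> c c'" using bij_betw_trans[OF e bij_betw_inv_into[OF e']] .
  moreover have "map_prod ?\<iota> ?\<iota> ` (f n \<inter> c \<times> c) = f n \<inter> c' \<times> c'" for n
  proof -
    have "map_prod ?\<iota> ?\<iota> ` (f n \<inter> c \<times> c)
        = map_prod (inv_into c' e') (inv_into c' e') ` map_prod e' e' ` (f n \<inter> c' \<times> c')"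
      using eq unfolding e_def e'_def iso_code_def map_prod_image_comp[symmetric] by (metis prod.inject)
    also have "\<dots> = f n \<inter> c' \<times> c'"
      unfolding map_prod_image_comp using bij_betw_inv_into_left[OF e']
      by (intro map_prod_image_id_on[of c']) auto
    finally show ?thesis .
  qed
  ultimately show ?thesis by blast
qed

lemma card_of_iso_code_type: "|UNIV :: (nat set \<times> (nat \<Rightarrow> nat rel)) set| \<le>o |UNIV :: nat set set|"
proof -
  define enc :: "nat set \<times> (nat \<Rightarrow> nat rel) \<Rightarrow> (nat + nat \<times> nat \<times> nat) set"
    where "enc z = Inl ` fst z \<union> Inr ` {(n, p). p \<in> snd z n}" for z
  have "fst z = Inl -` enc z" "snd z = (\<lambda>n. {p. Inr (n, p) \<in> enc z})" for z
    unfolding enc_def by auto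
  then have "inj enc" by (metis injI prod_eqI)
  moreover have "inj (image (to_nat :: nat + nat \<times> nat \<times> nat \<Rightarrow> nat))"
    by (simp add: inj_on_def inj_image_eq_iff)
  ultimately have "inj (image to_nat \<circ> enc)" by (simp add: inj_compose)
  then show ?thesis by (rule card_of_ordLeqI) simp
qed

lemma card_of_defective_orbits:
  assumes f: "\<forall>n. f n \<in> Ialpha X Al" and Al: "|Al| <o |X|" and nat: "|UNIV :: nat set| <o |X|"
  shows "|{c \<in> X // orbit_rel X f. \<exists>n. \<not> c \<subseteq> Domain (f n) \<inter> Range (f n)}| <o |X|"
proof -
  have X: "infinite X" using infinite_iff_card_of_nat[of X] ordLess_imp_ordLeq[OF nat] by simp
  define D where "D = (\<Union>n. (X - Domain (f n)) \<union> (X - Range (f n)))"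
  let ?B = "Al <+> (UNIV :: nat set)"
  have B: "infinite ?B" by (simp add: infinite_UNIV_nat)
  have "|X - Domain (f n)| \<le>o |?B|" "|X - Range (f n)| \<le>o |?B|" for n
    using f ordLeq_transitive[OF _ card_of_Plus1] unfolding Ialpha_def by blast+
  then have "|D| \<le>o |?B|"
    unfolding D_def by (intro card_of_UNION_ordLeq_infinite[OF B card_of_Plus2] ballI card_of_Un_ordLeq_infinite[OF B])
  also have "|?B| <o |X|" using card_of_Plus_ordLess_infinite[OF X Al nat] .
  finally have D: "|D| <o |X|" .
  have "|{c \<in> X // orbit_rel X f. \<exists>n. \<not> c \<subseteq> Domain (f n) \<inter> Range (f n)}| \<le>o |D|"
  proof (rule card_of_disjoint_ordLeq)
    show "disjoint {c \<in> X // orbit_rel X f. \<exists>n. \<not> c \<subseteq> Domain (f n) \<inter> Range (f n)}"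
      using orbit_partition(2)[OF f] by (rule pairwise_subset) blast
    show "\<forall>c\<in>{c \<in> X // orbit_rel X f. \<exists>n. \<not> c \<subseteq> Domain (f n) \<inter> Range (f n)}. c \<inter> D \<noteq> {}"
      unfolding D_def using in_quotient_imp_subset[OF equiv_orbit_rel] by blast
  qed
  then show ?thesis using D by (rule ordLeq_ordLess_trans)
qed

lemma exists_homogeneous_orbits:
  assumes f: "\<forall>n. f n \<in> Ialpha X Al" and reg: "regular_card X"
    and big: "|UNIV :: nat set set| <o |X|" and bad: "|{c \<in> X // orbit_rel X f. \<not> P c}| <o |X|"
  obtains K C \<iota> where "K \<subseteq> X // orbit_rel X f" "|K| =o |X|" "C \<in> K" "\<forall>k\<in>K. P k"
    "\<forall>k\<in>K. bij_betw (\<iota> k) C k \<and> (\<forall>n. map_prod (\<iota> k) (\<iota> k) ` (f n \<inter> C \<times> C) = f n \<inter> k \<times> k)"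
proof -
  let ?Q = "X // orbit_rel X f"
  note Q = orbit_partition[OF f]
  have nat: "|UNIV :: nat set| <o |X|" using card_of_nat_ordLeq_nat_set big by (rule ordLeq_ordLess_trans)
  have X: "infinite X" using reg unfolding regular_card_def by simp
  have "\<forall>c\<in>?Q. countable c" using Q(3) by blast
  from regular_card_pigeonhole[OF reg nat Q(1) this ordLeq_ordLess_trans[OF card_of_iso_code_type big] bad]
  obtain \<tau> where \<tau>: "|X| \<le>o |{c\<in>?Q. P c \<and> iso_code f c = \<tau>}|" ..
  define K where "K = {c\<in>?Q. P c \<and> iso_code f c = \<tau>}"
  have KQ: "K \<subseteq> ?Q" unfolding K_def by blast
  have "|K| \<le>o |X|"
  proof (rule card_of_disjoint_ordLeq)
    show "disjoint K" using Q(2) KQ by (rule pairwise_subset)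
    show "\<forall>c\<in>K. c \<inter> X \<noteq> {}"
    proof
      fix c assume "c \<in> K"
      with KQ have "c \<in> ?Q" by blast
      then have "c \<subseteq> X" "c \<noteq> {}" using Q(3) in_quotient_imp_subset[OF equiv_orbit_rel] by blast+
      then show "c \<inter> X \<noteq> {}" by blast
    qed
  qed
  then have K: "|K| =o |X|" using \<tau> unfolding K_def[symmetric] by (simp add: ordIso_iff_ordLeq)
  have "K \<noteq> {}" using \<tau> X card_of_empty3 unfolding K_def[symmetric] by blast
  then obtain C where C: "C \<in> K" by blast
  have "\<forall>k\<in>K. \<exists>\<iota>. bij_betw \<iota> C k \<and> (\<forall>n. map_prod \<iota> \<iota> ` (f n \<inter> C \<times> C) = f n \<inter> k \<times> k)"
  proof
    fix k assume "k \<in> K"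
    with C have "countable C" "countable k" "iso_code f C = iso_code f k"
      using KQ Q(3) unfolding K_def by auto
    then show "\<exists>\<iota>. bij_betw \<iota> C k \<and> (\<forall>n. map_prod \<iota> \<iota> ` (f n \<inter> C \<times> C) = f n \<inter> k \<times> k)"
      by (rule iso_code_eq_imp_iso)
  qed
  from bchoice[OF this] obtain \<iota>
    where "\<forall>k\<in>K. bij_betw (\<iota> k) C k \<and> (\<forall>n. map_prod (\<iota> k) (\<iota> k) ` (f n \<inter> C \<times> C) = f n \<inter> k \<times> k)" ..
  moreover have "\<forall>k\<in>K. P k" unfolding K_def by blast
  ultimately show thesis using that KQ K C by blast
qed

section \<open>Sums of copies\<close>

definition rel_Plus :: "'a rel \<Rightarrow> 'b rel \<Rightarrow> ('a + 'b) rel" where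
  "rel_Plus r r' = {(Inl a, Inl b) | a b. (a, b) \<in> r} \<union> {(Inr a, Inr b) | a b. (a, b) \<in> r'}"

definition rel_copies :: "'e set \<Rightarrow> 'c rel \<Rightarrow> ('e \<times> 'c) rel" where
  "rel_copies E r = {((e, a), (e, b)) | e a b. e \<in> E \<and> (a, b) \<in> r}"

lemma rel_Plus_eq: "rel_Plus r r' = map_prod Inl Inl ` r \<union> map_prod Inr Inr ` r'"
  unfolding rel_Plus_def by auto

lemma rel_copies_eq: "rel_copies E r = (\<Union>e\<in>E. map_prod (Pair e) (Pair e) ` r)"
  unfolding rel_copies_def by auto

lemma Domain_rel_Plus [simp]: "Domain (rel_Plus r r') = Domain r <+> Domain r'"
  unfolding rel_Plus_def by (auto simp: Domain_iff)

lemma Range_rel_Plus [simp]: "Range (rel_Plus r r') = Range r <+> Range r'"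
  unfolding rel_Plus_def by (auto simp: Range_iff)

lemma Domain_rel_copies [simp]: "Domain (rel_copies E r) = E \<times> Domain r"
  unfolding rel_copies_def by (auto simp: Domain_iff)

lemma Range_rel_copies [simp]: "Range (rel_copies E r) = E \<times> Range r"
  unfolding rel_copies_def by (auto simp: Range_iff)

lemma converse_rel_Plus: "(rel_Plus r r')\<inverse> = rel_Plus (r\<inverse>) (r'\<inverse>)"
  unfolding rel_Plus_def by auto

lemma single_valued_rel_Plus: "single_valued r \<Longrightarrow> single_valued r' \<Longrightarrow> single_valued (rel_Plus r r')"
  unfolding rel_Plus_def single_valued_def by auto

lemma converse_rel_copies: "(rel_copies E r)\<inverse> = rel_copies E (r\<inverse>)"
  unfolding rel_copies_def by auto

lemma single_valued_rel_copies: "single_valued r \<Longrightarrow> single_valued (rel_copies E r)"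
  unfolding rel_copies_def single_valued_def by auto

lemma rel_Plus_restrict:
  "rel_Plus r r' \<inter> (S <+> T) \<times> (S <+> T) = rel_Plus (r \<inter> S \<times> S) (r' \<inter> T \<times> T)"
  unfolding rel_Plus_def by auto

lemma rel_copies_restrict:
  "rel_copies E r \<inter> (E' \<times> C) \<times> (E' \<times> C) = rel_copies (E \<inter> E') (r \<inter> C \<times> C)"
  unfolding rel_copies_def by auto

lemma partial_perm_rel_Plus:
  assumes "partial_perm S r" "partial_perm T r'"
  shows "partial_perm (S <+> T) (rel_Plus r r')"
proof -
  have "rel_Plus r r' \<subseteq> (S <+> T) \<times> (S <+> T)"
    using assms unfolding partial_perm_def rel_Plus_def by auto
  then show ?thesis
    using assms single_valued_rel_Plus unfolding partial_perm_def converse_rel_Plus by blast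
qed

lemma partial_perm_rel_copies:
  assumes "partial_perm C r"
  shows "partial_perm (E \<times> C) (rel_copies E r)"
proof -
  have "rel_copies E r \<subseteq> (E \<times> C) \<times> (E \<times> C)"
    using assms unfolding partial_perm_def rel_copies_def by auto
  then show ?thesis
    using assms single_valued_rel_copies unfolding partial_perm_def converse_rel_copies by blast
qed

lemma Ialpha_rel_Plus_copies:
  assumes t: "t \<in> Ialpha X Al" and X0: "X0 \<subseteq> X" "rel_invariant X0 t" and C: "rel_invariant C t"
    and full: "C \<subseteq> Domain t \<inter> Range t \<or> |X0 <+> E \<times> C| \<le>o |Al|"
  shows "rel_Plus (t \<inter> X0 \<times> X0) (rel_copies E (t \<inter> C \<times> C)) \<in> Ialpha (X0 <+> E \<times> C) Al"
    (is "?s \<in> _")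
proof -
  have "partial_perm X t" using t by (rule Ialpha_partial_perm)
  then have pp: "partial_perm (X0 <+> E \<times> C) ?s"
    by (intro partial_perm_rel_Plus partial_perm_rel_copies partial_perm_restrict)
  show ?thesis
  proof (cases "C \<subseteq> Domain t \<inter> Range t")
    case True
    then have "Domain (t \<inter> C \<times> C) = C" "Range (t \<inter> C \<times> C) = C"
      unfolding Domain_restrict_invariant[OF C] Range_restrict_invariant[OF C] by blast+
    then have "Domain ?s = (X0 \<inter> Domain t) <+> E \<times> C" "Range ?s = (X0 \<inter> Range t) <+> E \<times> C"
      by (simp_all add: Domain_restrict_invariant[OF X0(2)] Range_restrict_invariant[OF X0(2)])
    then have "(X0 <+> E \<times> C) - Domain ?s = Inl ` (X0 - Domain t)"
      "(X0 <+> E \<times> C) - Range ?s = Inl ` (X0 - Range t)"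
      by auto
    moreover have "|Inl ` (X0 - D)| \<le>o |Al|" if "|X - D| \<le>o |Al|" for D
      using ordLeq_transitive[OF card_of_image ordLeq_transitive[OF card_of_mono1 that]] X0(1)
      by blast
    then have "|Inl ` (X0 - Domain t)| \<le>o |Al|" "|Inl ` (X0 - Range t)| \<le>o |Al|"
      using t unfolding Ialpha_def by blast+
    ultimately show ?thesis using pp unfolding Ialpha_def by simp
  next
    case False
    with full have "|X0 <+> E \<times> C| \<le>o |Al|" by blast
    with pp show ?thesis by (simp add: Ialpha_large_iff)
  qed
qed

lemma bij_betw_case_sum:
  assumes f: "bij_betw f A A'" and g: "bij_betw g B B'" and AB: "A' \<inter> B' = {}"
  shows "bij_betw (case_sum f g) (A <+> B) (A' \<union> B')"
proof -
  have "bij_betw (case_sum f g) (Inl ` A) A'"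
    using f unfolding bij_betw_def inj_on_def by (simp add: image_image)
  moreover have "bij_betw (case_sum f g) (Inr ` B) B'"
    using g unfolding bij_betw_def inj_on_def by (simp add: image_image)
  ultimately show ?thesis unfolding Plus_def using AB by (rule bij_betw_combine)
qed

lemma bij_betw_disjoint_Union:
  assumes K: "disjoint K" and \<iota>: "\<forall>k\<in>K. bij_betw (\<iota> k) C k"
  shows "bij_betw (\<lambda>(k, c). \<iota> k c) (K \<times> C) (\<Union>K)"
proof (rule bij_betw_imageI)
  have \<iota>_in: "\<iota> k c \<in> k" if "k \<in> K" "c \<in> C" for k c
    using bij_betw_apply[OF \<iota>[rule_format, OF that(1)] that(2)] .
  show "inj_on (\<lambda>(k, c). \<iota> k c) (K \<times> C)"
  proof (rule inj_onI, clarify)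
    fix k c k' c' assume kc: "k \<in> K" "c \<in> C" "k' \<in> K" "c' \<in> C" and eq: "\<iota> k c = \<iota> k' c'"
    have "k = k'" using \<iota>_in[OF kc(1,2)] \<iota>_in[OF kc(3,4)] eq disjoint_common_elem[OF K kc(1,3)] by simp
    with \<iota> kc eq show "k = k' \<and> c = c'" unfolding bij_betw_def inj_on_def by blast
  qed
  show "(\<lambda>(k, c). \<iota> k c) ` (K \<times> C) = \<Union>K"
  proof
    show "(\<lambda>(k, c). \<iota> k c) ` (K \<times> C) \<subseteq> \<Union>K" using \<iota>_in by auto
    show "\<Union>K \<subseteq> (\<lambda>(k, c). \<iota> k c) ` (K \<times> C)"
    proof
      fix x assume "x \<in> \<Union>K"
      then obtain k where k: "k \<in> K" "x \<in> k" by blast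
      then obtain c where "c \<in> C" "x = \<iota> k c" using \<iota> unfolding bij_betw_def by blast
      with k show "x \<in> (\<lambda>(k, c). \<iota> k c) ` (K \<times> C)" by blast
    qed
  qed
qed

lemma map_prod_rel_Plus:
  "map_prod (case_sum f g) (case_sum f g) ` rel_Plus r r' = map_prod f f ` r \<union> map_prod g g ` r'"
  unfolding rel_Plus_eq image_Un image_comp map_prod.comp by (simp add: case_sum_o_inj)

lemma map_prod_rel_copies:
  "map_prod (\<lambda>(e, c). h e c) (\<lambda>(e, c). h e c) ` rel_copies E r = (\<Union>e\<in>E. map_prod (h e) (h e) ` r)"
  unfolding rel_copies_eq image_UN image_comp map_prod.comp by (simp add: comp_def)

lemma bij_betw_Plus_copies:
  assumes K: "disjoint K" and X0K: "X0 \<inter> \<Union>K = {}" and \<sigma>: "bij_betw \<sigma> E K"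
    and \<iota>: "\<forall>k\<in>K. bij_betw (\<iota> k) C k"
  shows "bij_betw (case_sum id (\<lambda>(e, c). \<iota> (\<sigma> e) c)) (X0 <+> E \<times> C) (X0 \<union> \<Union>K)"
proof -
  have "bij_betw ((\<lambda>(k, c). \<iota> k c) \<circ> map_prod \<sigma> id) (E \<times> C) (\<Union>K)"
    using bij_betw_map_prod[OF \<sigma> bij_betw_id] bij_betw_disjoint_Union[OF K \<iota>] by (rule bij_betw_trans)
  moreover have "(\<lambda>(k, c). \<iota> k c) \<circ> map_prod \<sigma> id = (\<lambda>(e, c). \<iota> (\<sigma> e) c)" by auto
  ultimately show ?thesis using bij_betw_case_sum[OF bij_betw_id _ X0K] by simp
qed

lemma map_prod_rel_Plus_copies:
  assumes \<sigma>: "\<sigma> ` E = K" and \<iota>: "\<forall>k\<in>K. map_prod (\<iota> k) (\<iota> k) ` (t \<inter> C \<times> C) = t \<inter> k \<times> k"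
    and t: "t \<subseteq> (X0 \<union> \<Union>K) \<times> (X0 \<union> \<Union>K)" "rel_invariant X0 t" "\<forall>k\<in>K. rel_invariant k t"
  shows "map_prod (case_sum id (\<lambda>(e, c). \<iota> (\<sigma> e) c)) (case_sum id (\<lambda>(e, c). \<iota> (\<sigma> e) c))
      ` rel_Plus (t \<inter> X0 \<times> X0) (rel_copies E (t \<inter> C \<times> C)) = t"
proof -
  have "map_prod (case_sum id (\<lambda>(e, c). \<iota> (\<sigma> e) c)) (case_sum id (\<lambda>(e, c). \<iota> (\<sigma> e) c))
      ` rel_Plus (t \<inter> X0 \<times> X0) (rel_copies E (t \<inter> C \<times> C))
      = (t \<inter> X0 \<times> X0) \<union> (\<Union>e\<in>E. map_prod (\<iota> (\<sigma> e)) (\<iota> (\<sigma> e)) ` (t \<inter> C \<times> C))"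
    unfolding map_prod_rel_Plus map_prod_rel_copies by (simp add: map_prod.id)
  also have "\<dots> = (t \<inter> X0 \<times> X0) \<union> (\<Union>e\<in>E. t \<inter> \<sigma> e \<times> \<sigma> e)"
  proof -
    have "\<forall>e\<in>E. map_prod (\<iota> (\<sigma> e)) (\<iota> (\<sigma> e)) ` (t \<inter> C \<times> C) = t \<inter> \<sigma> e \<times> \<sigma> e"
      using \<sigma> \<iota> by blast
    then show ?thesis by simp
  qed
  also have "\<dots> = (t \<inter> X0 \<times> X0) \<union> (\<Union>k\<in>K. t \<inter> k \<times> k)" unfolding \<sigma>[symmetric] by (simp add: image_image)
  also have "\<dots> = (\<Union>p\<in>insert X0 K. t \<inter> p \<times> p)" by simp
  also have "\<dots> = t"
    using t unfolding rel_invariant_def by (intro rel_eq_UN_restrict[symmetric]) auto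
  finally show ?thesis .
qed

section \<open>From larger to smaller sets\<close>

definition adjacent :: "'x rel set \<Rightarrow> 'x \<Rightarrow> 'x set" where
  "adjacent F p = (\<Union>r\<in>F. r `` {p} \<union> r\<inverse> `` {p})"

definition Inr_slice :: "('x + 'e \<times> 'c) set \<Rightarrow> 'e set" where
  "Inr_slice S = {e. \<exists>c. Inr (e, c) \<in> S}"

lemma countable_adjacent:
  assumes "countable F" "\<forall>r\<in>F. single_valued r \<and> single_valued (r\<inverse>)"
  shows "countable (adjacent F p)"
  unfolding adjacent_def using assms by (intro countable_UN countable_Un countable_Image_single_valued) auto

lemma Inr_slice_subset_image: "Inr_slice S \<subseteq> (\<lambda>p. fst (projr p)) ` S"
  unfolding Inr_slice_def by force

lemma countable_Inr_slice: "countable S \<Longrightarrow> countable (Inr_slice S)"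
  using Inr_slice_subset_image by (meson countable_image countable_subset)

lemma card_of_Inr_slice: "|Inr_slice S| \<le>o |S|"
  using ordLeq_transitive[OF card_of_mono1[OF Inr_slice_subset_image] card_of_image] .

lemma Inr_slice_subset: "S \<subseteq> X0 <+> E \<times> C \<Longrightarrow> Inr_slice S \<subseteq> E"
  unfolding Inr_slice_def by blast

lemma rel_invariant_Plus_slice:
  assumes F: "\<forall>r\<in>F. r \<subseteq> (X0 <+> EE \<times> C) \<times> (X0 <+> EE \<times> C)"
    and E_X0: "Inr_slice (\<Union>x\<in>X0. adjacent F (Inl x)) \<subseteq> E"
    and E_closed: "\<forall>e\<in>E. Inr_slice (\<Union>c\<in>C. adjacent F (Inr (e, c))) \<subseteq> E"
    and r: "r \<in> F"
  shows "rel_invariant (X0 <+> E \<times> C) r"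
proof -
  let ?Z = "X0 <+> E \<times> C"
  have closed: "q \<in> ?Z" if p: "p \<in> ?Z" and pq: "q \<in> adjacent F p" for p q
  proof -
    have q: "q \<in> X0 <+> EE \<times> C" using pq F unfolding adjacent_def by blast
    show ?thesis
    proof (cases q)
      case (Inr ec)
      then obtain e' c' where q_eq: "q = Inr (e', c')" "c' \<in> C" using q by auto
      have "e' \<in> E"
      proof (cases p)
        case (Inl x)
        with p have "x \<in> X0" by auto
        with pq Inl q_eq have "Inr (e', c') \<in> (\<Union>x\<in>X0. adjacent F (Inl x))" by blast
        then show ?thesis using E_X0 unfolding Inr_slice_def by blast
      next
        case (Inr ec)
        with p obtain e c where "p = Inr (e, c)" "e \<in> E" "c \<in> C" by auto
        with pq q_eq have "Inr (e', c') \<in> (\<Union>c\<in>C. adjacent F (Inr (e, c)))" by blast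
        then show ?thesis using E_closed \<open>e \<in> E\<close> unfolding Inr_slice_def by blast
      qed
      with q_eq show ?thesis by blast
    qed (use q in auto)
  qed
  have "q \<in> adjacent F p" if "(p, q) \<in> r \<or> (q, p) \<in> r" for p q
    using r that unfolding adjacent_def by blast
  then show ?thesis unfolding rel_invariant_def using closed by blast
qed

lemma exists_invariant_slice:
  fixes F :: "('x + 'e \<times> 'c) rel set"
  assumes F: "countable F" "\<forall>r\<in>F. single_valued r \<and> single_valued (r\<inverse>)"
    "\<forall>r\<in>F. r \<subseteq> (X0 <+> EE \<times> C) \<times> (X0 <+> EE \<times> C)"
    and C: "countable C" and X: "infinite X" and X0: "|X0| \<le>o |X|" and E0: "E0 \<subseteq> EE" "|E0| \<le>o |X|"
  shows "\<exists>E. E0 \<subseteq> E \<and> E \<subseteq> EE \<and> |E| \<le>o |X| \<and> (\<forall>r\<in>F. rel_invariant (X0 <+> E \<times> C) r)"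
proof -
  have adj: "countable (adjacent F p)" for p using F(1,2) by (rule countable_adjacent)
  have adj_sub: "adjacent F p \<subseteq> X0 <+> EE \<times> C" for p using F(3) unfolding adjacent_def by blast
  define N where "N e = Inr_slice (\<Union>c\<in>C. adjacent F (Inr (e, c)))" for e
  define E1 where "E1 = E0 \<union> Inr_slice (\<Union>x\<in>X0. adjacent F (Inl x))"
  have "|\<Union>x\<in>X0. adjacent F (Inl x)| \<le>o |X|"
    using adj countable_ordLeq_infinite[OF _ X] by (intro card_of_UNION_ordLeq_infinite[OF X X0]) auto
  then have "|E1| \<le>o |X|"
    unfolding E1_def using card_of_Un_ordLeq_infinite[OF X E0(2) ordLeq_transitive[OF card_of_Inr_slice]] by blast
  moreover have "\<forall>e. countable (N e)"
    unfolding N_def by (intro allI countable_Inr_slice countable_UN[OF C adj])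
  ultimately have "\<exists>E. E1 \<subseteq> E \<and> E \<subseteq> E1 \<union> \<Union>(range N) \<and> |E| \<le>o |X| \<and> (\<forall>e\<in>E. N e \<subseteq> E)"
    by (rule exists_closed_superset[OF X])
  then obtain E where E: "E1 \<subseteq> E" "E \<subseteq> E1 \<union> \<Union>(range N)" "|E| \<le>o |X|" "\<forall>e\<in>E. N e \<subseteq> E"
    by (elim exE conjE)
  have "Inr_slice (\<Union>x\<in>X0. adjacent F (Inl x)) \<subseteq> EE" by (rule Inr_slice_subset) (use adj_sub in blast)
  then have "E1 \<subseteq> EE" unfolding E1_def using E0(1) by blast
  moreover have "N e \<subseteq> EE" for e unfolding N_def by (rule Inr_slice_subset) (use adj_sub in blast)
  ultimately have "E \<subseteq> EE" using E(2) by blast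
  moreover have "\<forall>r\<in>F. rel_invariant (X0 <+> E \<times> C) r"
  proof
    fix r assume "r \<in> F"
    show "rel_invariant (X0 <+> E \<times> C) r"
    proof (rule rel_invariant_Plus_slice[OF F(3) _ _ \<open>r \<in> F\<close>])
      show "Inr_slice (\<Union>x\<in>X0. adjacent F (Inl x)) \<subseteq> E" using E(1) unfolding E1_def by blast
      show "\<forall>e\<in>E. Inr_slice (\<Union>c\<in>C. adjacent F (Inr (e, c))) \<subseteq> E" using E(4) unfolding N_def .
    qed
  qed
  moreover have "E0 \<subseteq> E" using E(1) unfolding E1_def by blast
  ultimately show ?thesis using E(3) by blast
qed

lemma realizable_copies_small_slice:
  assumes h: "realizable A w (Ialpha (X0 <+> Y \<times> C) Al) (\<lambda>n. rel_Plus (r n) (rel_copies Y (q n)))"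
    and r: "\<forall>n. r n \<subseteq> X0 \<times> X0" and q: "\<forall>n. q n \<subseteq> C \<times> C"
    and A: "countable A" and C: "countable C" and X: "infinite X" and X0: "|X0| \<le>o |X|"
    and XY: "|X| \<le>o |Y|"
  shows "\<exists>E\<subseteq>Y. |E| =o |X| \<and> realizable A w (Ialpha (X0 <+> E \<times> C) Al) (\<lambda>n. rel_Plus (r n) (rel_copies E (q n)))"
proof -
  obtain h where h: "semigroup_hom A (Ialpha (X0 <+> Y \<times> C) Al) h"
    and hw: "\<forall>n. h (w n) = rel_Plus (r n) (rel_copies Y (q n))"
    using h unfolding realizable_def by blast
  have "\<exists>g. inj_on g X \<and> g ` X \<subseteq> Y" using XY card_of_ordLeq[of X Y] by simp
  then obtain g where g: "inj_on g X" "g ` X \<subseteq> Y" by (elim exE conjE)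
  have gX: "|g ` X| =o |X|" using ordIso_symmetric[OF card_of_ordIsoI[OF inj_on_imp_bij_betw[OF g(1)]]] .
  define F where "F = h ` {u. u \<noteq> [] \<and> set u \<subseteq> A}"
  have "countable {u. u \<noteq> [] \<and> set u \<subseteq> A}"
    using countable_lists[OF A] by (rule countable_subset[rotated]) (auto simp: lists_eq_set)
  then have "countable F" unfolding F_def by (rule countable_image)
  moreover have "\<forall>r\<in>F. single_valued r \<and> single_valued (r\<inverse>)" "\<forall>r\<in>F. r \<subseteq> (X0 <+> Y \<times> C) \<times> (X0 <+> Y \<times> C)"
    unfolding F_def using semigroup_homD[OF h] Ialpha_single_valued Ialpha_subset by blast+
  ultimately have "\<exists>E. g ` X \<subseteq> E \<and> E \<subseteq> Y \<and> |E| \<le>o |X| \<and> (\<forall>r\<in>F. rel_invariant (X0 <+> E \<times> C) r)"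
    by (rule exists_invariant_slice[OF _ _ _ C X X0 g(2) ordIso_imp_ordLeq[OF gX]])
  then obtain E where E: "g ` X \<subseteq> E" "E \<subseteq> Y" "|E| \<le>o |X|"
    and inv: "\<forall>r\<in>F. rel_invariant (X0 <+> E \<times> C) r"
    by (elim exE conjE)
  let ?Z = "X0 <+> E \<times> C"
  have "|X| \<le>o |E|" using ordIso_ordLeq_trans[OF ordIso_symmetric[OF gX] card_of_mono1[OF E(1)]] .
  with E(3) have E_card: "|E| =o |X|" by (simp add: ordIso_iff_ordLeq)
  moreover have "semigroup_hom A (Ialpha ?Z Al) (\<lambda>u. h u \<inter> ?Z \<times> ?Z)"
    using E(2) inv unfolding F_def by (intro semigroup_hom_restrict[OF h]) auto
  moreover have "rel_Plus (r n) (rel_copies Y (q n)) \<inter> ?Z \<times> ?Z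
      = rel_Plus (r n) (rel_copies E (q n))" for n
    using r q E(2) by (simp add: rel_Plus_restrict rel_copies_restrict Int_absorb2 Int_absorb1)
  ultimately have real: "realizable A w (Ialpha ?Z Al) (\<lambda>n. rel_Plus (r n) (rel_copies E (q n)))"
    using hw unfolding realizable_def by (intro exI[of _ "\<lambda>u. h u \<inter> ?Z \<times> ?Z"]) simp
  with E(2) E_card show ?thesis by blast
qed

lemma card_of_Plus_Times_countable:
  assumes Y: "infinite Y" and X0: "|X0| \<le>o |Y|" and C: "countable C" "C \<noteq> {}"
  shows "|X0 <+> Y \<times> C| =o |Y|"
proof -
  have YC: "|Y \<times> C| =o |Y|"
    using card_of_Times_infinite[OF Y C(2) countable_ordLeq_infinite[OF C(1) Y]] by blast
  have "infinite (Y \<times> C)" using Y C(2) by (auto simp: finite_cartesian_product_iff)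
  moreover have "|X0| \<le>o |Y \<times> C|" using ordLeq_ordIso_trans[OF X0 ordIso_symmetric[OF YC]] .
  ultimately have "|X0 <+> Y \<times> C| =o |Y \<times> C|" by (rule card_of_Plus_infinite2)
  then show ?thesis using YC by (rule ordIso_transitive)
qed

lemma realizable_of_copies_iso:
  assumes real: "realizable A w (Ialpha (X0 <+> E \<times> C) Al)
      (\<lambda>n. rel_Plus (t n \<inter> X0 \<times> X0) (rel_copies E (t n \<inter> C \<times> C)))"
    and E: "|E| =o |K|" and K: "disjoint K" "X0 \<inter> \<Union>K = {}"
    and \<iota>: "\<forall>k\<in>K. bij_betw (\<iota> k) C k \<and> (\<forall>n. map_prod (\<iota> k) (\<iota> k) ` (t n \<inter> C \<times> C) = t n \<inter> k \<times> k)"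
    and t: "\<forall>n. t n \<subseteq> (X0 \<union> \<Union>K) \<times> (X0 \<union> \<Union>K)" "\<forall>n. rel_invariant X0 (t n)"
      "\<forall>n. \<forall>k\<in>K. rel_invariant k (t n)"
  shows "realizable A w (Ialpha (X0 \<union> \<Union>K) Al) t"
proof -
  obtain \<sigma> where \<sigma>: "bij_betw \<sigma> E K" using E unfolding card_of_ordIso[symmetric] by blast
  let ?\<phi> = "case_sum id (\<lambda>(e, c). \<iota> (\<sigma> e) c)"
  have "\<forall>k\<in>K. bij_betw (\<iota> k) C k" using \<iota> by blast
  with K \<sigma> have "bij_betw ?\<phi> (X0 <+> E \<times> C) (X0 \<union> \<Union>K)" by (intro bij_betw_Plus_copies)
  from realizable_map_prod[OF real this]
  have "realizable A w (Ialpha (X0 \<union> \<Union>K) Al)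
      (\<lambda>n. map_prod ?\<phi> ?\<phi> ` rel_Plus (t n \<inter> X0 \<times> X0) (rel_copies E (t n \<inter> C \<times> C)))" .
  moreover have "map_prod ?\<phi> ?\<phi> ` rel_Plus (t n \<inter> X0 \<times> X0) (rel_copies E (t n \<inter> C \<times> C)) = t n" for n
    using \<iota> t bij_betw_imp_surj_on[OF \<sigma>] by (intro map_prod_rel_Plus_copies) auto
  ultimately show ?thesis by simp
qed

lemma realizable_of_homogeneous_orbits:
  assumes t: "\<forall>n. t n \<in> Ialpha X Al"
    and K: "K \<subseteq> X // orbit_rel X t" "|K| =o |X|" and CK: "C \<in> K"
    and \<iota>: "\<forall>k\<in>K. bij_betw (\<iota> k) C k \<and> (\<forall>n. map_prod (\<iota> k) (\<iota> k) ` (t n \<inter> C \<times> C) = t n \<inter> k \<times> k)"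
    and full: "(\<forall>n. C \<subseteq> Domain (t n) \<inter> Range (t n)) \<or> |Y| \<le>o |Al|"
    and X: "infinite X" and XY: "|X| <o |Y|" and A: "countable A" and U: "universal A w (Ialpha Y Al)"
  shows "realizable A w (Ialpha X Al) t"
proof -
  note Q = orbit_partition[OF t]
  have tX: "t n \<subseteq> X \<times> X" for n using t Ialpha_subset by blast
  have K_inv: "\<forall>k\<in>K. rel_invariant k (t n)" for n using K(1) rel_invariant_orbit[of t n X, OF tX] by blast
  define X0 where "X0 = X - \<Union>K"
  have X0_inv: "rel_invariant X0 (t n)" for n
  proof -
    have "rel_invariant X (t n)" using tX[of n] unfolding rel_invariant_def by blast
    then show ?thesis unfolding X0_def using rel_invariant_Union K_inv by (blast intro: rel_invariant_Diff)
  qed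
  have X0X: "X0 \<subseteq> X" and X_eq: "X0 \<union> \<Union>K = X" and X0K: "X0 \<inter> \<Union>K = {}"
    unfolding X0_def using K(1) Q(1) by blast+
  have C: "countable C" "C \<noteq> {}" using CK K(1) Q(3) by blast+
  have Y: "infinite Y" using X card_of_ordLeq_finite[OF ordLess_imp_ordLeq[OF XY]] by blast
  have X0Y: "|X0| \<le>o |Y|" using ordLeq_transitive[OF card_of_mono1[OF X0X] ordLess_imp_ordLeq[OF XY]] .
  have V: "|X0 <+> Y \<times> C| =o |Y|" by (rule card_of_Plus_Times_countable[OF Y X0Y C])
  define s where "s n = rel_Plus (t n \<inter> X0 \<times> X0) (rel_copies Y (t n \<inter> C \<times> C))" for n
  have "s n \<in> Ialpha (X0 <+> Y \<times> C) Al" for n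
  proof -
    have "C \<subseteq> Domain (t n) \<inter> Range (t n) \<or> |X0 <+> Y \<times> C| \<le>o |Al|"
      using full ordIso_ordLeq_trans[OF V] by blast
    then show ?thesis unfolding s_def
      using Ialpha_rel_Plus_copies[OF t[rule_format] X0X X0_inv K_inv[rule_format, OF CK]] by blast
  qed
  moreover have "universal A w (Ialpha (X0 <+> Y \<times> C) Al)"
    using U ordIso_symmetric[OF V] by (rule universal_Ialpha_card_eq)
  ultimately have "realizable A w (Ialpha (X0 <+> Y \<times> C) Al) s"
    unfolding universal_iff_realizable by blast
  then have "\<exists>E\<subseteq>Y. |E| =o |X| \<and> realizable A w (Ialpha (X0 <+> E \<times> C) Al)
      (\<lambda>n. rel_Plus (t n \<inter> X0 \<times> X0) (rel_copies E (t n \<inter> C \<times> C)))"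
    unfolding s_def using A C(1) X card_of_mono1[OF X0X] ordLess_imp_ordLeq[OF XY]
    by (intro realizable_copies_small_slice) auto
  then obtain E where "E \<subseteq> Y" and E: "|E| =o |X|"
    and real: "realizable A w (Ialpha (X0 <+> E \<times> C) Al)
      (\<lambda>n. rel_Plus (t n \<inter> X0 \<times> X0) (rel_copies E (t n \<inter> C \<times> C)))"
    by (elim exE conjE)
  have "realizable A w (Ialpha (X0 \<union> \<Union>K) Al) t"
  proof (rule realizable_of_copies_iso[OF real ordIso_transitive[OF E ordIso_symmetric[OF K(2)]]])
    show "disjoint K" using Q(2) K(1) by (rule pairwise_subset)
  qed (use X0K \<iota> tX X_eq X0_inv K_inv in auto)
  then show ?thesis unfolding X_eq .
qed

lemma universal_Ialpha_downward:
  assumes big: "|UNIV :: nat set set| <o |X|" and XY: "|X| <o |Y|" and reg: "regular_card X"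
    and Al: "|Al| <o |X| \<or> |Y| \<le>o |Al|" and A: "countable A" and U: "universal A w (Ialpha Y Al)"
  shows "universal A w (Ialpha X Al)"
  unfolding universal_iff_realizable
proof (intro allI impI)
  fix t :: "nat \<Rightarrow> _" assume t: "\<forall>n. t n \<in> Ialpha X Al"
  have X: "infinite X" using reg unfolding regular_card_def by simp
  let ?P = "\<lambda>c. (\<forall>n. c \<subseteq> Domain (t n) \<inter> Range (t n)) \<or> |Y| \<le>o |Al|"
  have "|{c \<in> X // orbit_rel X t. \<not> ?P c}| <o |X|"
  proof (cases "|Y| \<le>o |Al|")
    case True
    then show ?thesis using finite_ordLess_infinite2[OF finite.emptyI X] by simp
  next
    case False
    with Al have "|Al| <o |X|" by blast
    moreover have "|UNIV :: nat set| <o |X|"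
      using card_of_nat_ordLeq_nat_set big by (rule ordLeq_ordLess_trans)
    ultimately have "|{c \<in> X // orbit_rel X t. \<exists>n. \<not> c \<subseteq> Domain (t n) \<inter> Range (t n)}| <o |X|"
      by (rule card_of_defective_orbits[OF t])
    then show ?thesis using False by simp
  qed
  then obtain K C \<iota> where K: "K \<subseteq> X // orbit_rel X t" "|K| =o |X|" and C: "C \<in> K" "\<forall>k\<in>K. ?P k"
    and \<iota>: "\<forall>k\<in>K. bij_betw (\<iota> k) C k \<and> (\<forall>n. map_prod (\<iota> k) (\<iota> k) ` (t n \<inter> C \<times> C) = t n \<inter> k \<times> k)"
    by (rule exists_homogeneous_orbits[OF t reg big])
  from C have "?P C" by blast
  then show "realizable A w (Ialpha X Al) t"
    by (rule realizable_of_homogeneous_orbits[OF t K C(1) \<iota> _ X XY A U])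
qed

theorem theorem2p1:
  fixes X :: "'x set" and Y :: "'y set" and Al :: "'c set"
  assumes alpha: "infinite Al \<or> Al = {}"
  shows
   "(infinite X \<and> ordLess2 (card_of X) (card_of Y)
       \<and> (Al = {} \<or> ordIso2 (card_of Al) (card_of Y))
     \<longrightarrow> (\<forall>(A :: 'a set) w. countable A \<and> word_seq A w \<and> universal A w (Ialpha X Al)
              \<longrightarrow> universal A w (Ialpha Y Al)))
    \<and>
    (ordLess2 (card_of (UNIV :: nat set set)) (card_of X) \<and> ordLess2 (card_of X) (card_of Y)
       \<and> regular_card X
       \<and> (ordLess2 (card_of Al) (card_of X) \<or> ordLeq2 (card_of Y) (card_of Al))
     \<longrightarrow> (\<forall>(A :: 'b set) w. countable A \<and> word_seq A w \<and> universal A w (Ialpha Y Al)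
              \<longrightarrow> universal A w (Ialpha X Al)))"
proof (intro conjI impI allI; elim conjE)
  fix A :: "'a set" and w
  assume "infinite X" "|X| <o |Y|" "Al = {} \<or> |Al| =o |Y|" and "universal A w (Ialpha X Al)"
  then show "universal A w (Ialpha Y Al)" by (rule universal_Ialpha_upward)
next
  fix A :: "'b set" and w
  assume "|UNIV :: nat set set| <o |X|" "|X| <o |Y|" "regular_card X" "|Al| <o |X| \<or> |Y| \<le>o |Al|"
    and "countable A" and "universal A w (Ialpha Y Al)"
  then show "universal A w (Ialpha X Al)" by (rule universal_Ialpha_downward)
qed

end
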